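(* Let $\lambda>0$ and let $H_3=\mathbb{R}^3$ with coordinates $(x,y,z)$ carry the Lorentzian metric $g_1=-\frac{1}{\lambda^2}dx^2+dy^2+(x\,dy+dz)^2$, with Levi-Civita connection $\nabla$. Let $e_1=\partial_z$, $e_2=\partial_y-x\partial_z$, $e_3=\lambda\partial_x$, and let $V_2=\partial_y\,(=xe_1+e_2)$. Then every $V_2$-magnetic curve $\gamma(t)=(x(t),y(t),z(t))$, i.e. every smooth curve with $\nabla_{\gamma'}\gamma'=V_2\wedge\gamma'$, satisfies the system $y''+x'(z'+xy')=-\frac{xx'}{\lambda}$, $(\lambda y'-1)(z'+xy')=-xy'-\frac{x''}{\lambda}$, $(z'+xy')'=\frac{x'}{\lambda}$.
   Context: $(e_1,e_2,e_3)$ is a $g_1$-orthonormal frame with $e_3$ timelike. For $X=\sum X^ie_i$, $Y=\sum Y^ie_i$ the vector product is defined in this frame by $X\wedge Y=(X^2Y^3-X^3Y^2)e_1+(X^3Y^1-X^1Y^3)e_2+(X^2Y^1-X^1Y^2)e_3$. Primes denote derivatives in $t$. *)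

theory Defs
  imports "HOL-Analysis.Analysis"
begin

text \<open>Points of H_3 = R^3 are vectors p :: real^3 with coordinates
  x = p$1, y = p$2, z = p$3.  Tangent vectors are given by their components
  with respect to the coordinate frame (d/dx, d/dy, d/dz).\<close>

text \<open>Coefficient matrix of g_1 = -(1/lambda^2) dx^2 + dy^2 + (x dy + dz)^2.\<close>
definition gmat :: "real \<Rightarrow> real^3 \<Rightarrow> real^3^3" where
  "gmat lam p = (\<chi> i j.
      if i = 1 \<and> j = 1 then - 1 / lam^2
      else if i = 2 \<and> j = 2 then 1 + (p$1)^2
      else if (i = 2 \<and> j = 3) \<or> (i = 3 \<and> j = 2) then p$1
      else if i = 3 \<and> j = 3 then 1
      else 0)"

definition dgmat :: "real \<Rightarrow> 3 \<Rightarrow> 3 \<Rightarrow> 3 \<Rightarrow> real^3 \<Rightarrow> real" where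
  "dgmat lam i j k p = deriv (\<lambda>s. gmat lam (p + s *\<^sub>R axis i 1) $ j $ k) 0"

definition christoffel :: "real \<Rightarrow> 3 \<Rightarrow> 3 \<Rightarrow> 3 \<Rightarrow> real^3 \<Rightarrow> real" where
  "christoffel lam k i j p = (1/2) * (\<Sum>l\<in>UNIV.
      matrix_inv (gmat lam p) $ k $ l *
        (dgmat lam i j l p + dgmat lam j i l p - dgmat lam l i j p))"

definition vel :: "(real \<Rightarrow> real^3) \<Rightarrow> real \<Rightarrow> real^3" where
  "vel \<gamma> t = (\<chi> i. deriv (\<lambda>s. \<gamma> s $ i) t)"

definition cov_acc :: "real \<Rightarrow> (real \<Rightarrow> real^3) \<Rightarrow> real \<Rightarrow> real^3" where
  "cov_acc lam \<gamma> t = (\<chi> k. deriv (deriv (\<lambda>s. \<gamma> s $ k)) t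
      + (\<Sum>i\<in>UNIV. \<Sum>j\<in>UNIV. christoffel lam k i j (\<gamma> t) * vel \<gamma> t $ i * vel \<gamma> t $ j))"

definition frame :: "real \<Rightarrow> 3 \<Rightarrow> real^3 \<Rightarrow> real^3" where
  "frame lam i p = (if i = 1 then vector [0, 0, 1]
                    else if i = 2 then vector [0, 1, - (p$1)]
                    else vector [lam, 0, 0])"

definition fcoeff :: "real \<Rightarrow> real^3 \<Rightarrow> real^3 \<Rightarrow> real^3" where
  "fcoeff lam p X = (THE c. X = (\<Sum>i\<in>UNIV. c $ i *\<^sub>R frame lam i p))"

definition wedge :: "real \<Rightarrow> real^3 \<Rightarrow> real^3 \<Rightarrow> real^3 \<Rightarrow> real^3" where
  "wedge lam p X Y = (let a = fcoeff lam p X; b = fcoeff lam p Y in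
      (a$2 * b$3 - a$3 * b$2) *\<^sub>R frame lam 1 p
    + (a$3 * b$1 - a$1 * b$3) *\<^sub>R frame lam 2 p
    + (a$2 * b$1 - a$1 * b$2) *\<^sub>R frame lam 3 p)"

definition V2 :: "real^3" where
  "V2 = vector [0, 1, 0]"

end

theory Submission
  imports Defs
begin

text \<open>Only the x-derivatives of g_22 = 1 + x^2 and g_23 = x are nonzero, so the Christoffel
  symbols, and hence the covariant acceleration of gamma, are explicit.  In the frame
  (e_1, e_2, e_3) the field V_2 has components (x, 1, 0), which makes V_2 \<wedge> gamma' equally
  explicit.  The y- and x-components of the magnetic equation are the first two equations.
  The third follows by differentiating z' + x y' and inserting y'' from the first: what is
  left is the z-component of the magnetic equation.  Everything is pointwise in t.\<close>

lemma matrix_inv_eqI: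
  fixes A :: "'a::semiring_1^'n^'m"
  assumes "A ** B = mat 1" and "B ** A = mat 1"
  shows "matrix_inv A = B"
  unfolding matrix_inv_def
proof (rule someI2)
  show "A ** B = mat 1 \<and> B ** A = mat 1" using assms ..
next
  fix C assume "A ** C = mat 1 \<and> C ** A = mat 1"
  then have "C ** A = mat 1" ..
  have "C = C ** (A ** B)" by (simp add: assms(1) matrix_mul_rid)
  also have "\<dots> = B" by (simp add: matrix_mul_assoc \<open>C ** A = mat 1\<close> matrix_mul_lid)
  finally show "C = B" .
qed

lemma matrix_inv_gmat:
  assumes "lam \<noteq> 0"
  shows "matrix_inv (gmat lam p) = (\<chi> i j.
      if i = 1 \<and> j = 1 then -(lam^2)
      else if i = 2 \<and> j = 2 then 1
      else if (i = 2 \<and> j = 3) \<or> (i = 3 \<and> j = 2) then -(p$1)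
      else if i = 3 \<and> j = 3 then 1 + (p$1)^2
      else 0)"
  using assms
  by (intro matrix_inv_eqI)
     (simp_all add: vec_eq_iff forall_3 matrix_matrix_mult_def sum_3 gmat_def mat_def
        power2_eq_square field_simps)

lemma dgmat_eq:
  "dgmat lam i j k p =
     (if i = 1 \<and> j = 2 \<and> k = 2 then 2 * p$1
      else if i = 1 \<and> ((j = 2 \<and> k = 3) \<or> (j = 3 \<and> k = 2)) then 1
      else 0)"
proof -
  have shift: "(p + s *\<^sub>R axis i 1) $ 1 = p$1 + (if i = 1 then s else 0)" for s
    by (simp add: axis_def)
  show ?thesis
    unfolding dgmat_def gmat_def vec_lambda_beta shift
    using exhaust_3[of i] exhaust_3[of j] exhaust_3[of k]
    by (elim disjE) (auto intro!: DERIV_imp_deriv derivative_eq_intros)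
qed

lemma cov_acc_eq:
  fixes \<gamma> :: "real \<Rightarrow> real^3"
  assumes "lam \<noteq> 0"
  defines "x \<equiv> \<lambda>s. \<gamma> s $ 1" and "y \<equiv> \<lambda>s. \<gamma> s $ 2" and "z \<equiv> \<lambda>s. \<gamma> s $ 3"
  shows "cov_acc lam \<gamma> t = vector [
      deriv (deriv x) t + lam^2 * deriv y t * (deriv z t + x t * deriv y t),
      deriv (deriv y) t + deriv x t * (deriv z t + x t * deriv y t),
      deriv (deriv z) t + deriv x t * deriv y t - x t * deriv x t * (deriv z t + x t * deriv y t)]"
  using assms
  by (simp add: vec_eq_iff forall_3 cov_acc_def christoffel_def matrix_inv_gmat sum_3 dgmat_eq
      vel_def algebra_simps power2_eq_square)

lemma fcoeff_eq:
  assumes "lam \<noteq> 0"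
  shows "fcoeff lam p X = vector [X$3 + p$1 * X$2, X$2, X$1 / lam]"
  unfolding fcoeff_def
proof (rule the_equality)
  show "X = (\<Sum>i\<in>UNIV. vector [X$3 + p$1 * X$2, X$2, X$1 / lam] $ i *\<^sub>R frame lam i p)"
    using assms by (simp add: vec_eq_iff forall_3 sum_3 frame_def)
next
  fix c :: "real^3"
  assume "X = (\<Sum>i\<in>UNIV. c $ i *\<^sub>R frame lam i p)"
  then have "X$1 = lam * c$3" "X$2 = c$2" "X$3 = c$1 - p$1 * c$2"
    by (simp_all add: sum_3 frame_def)
  then show "c = vector [X$3 + p$1 * X$2, X$2, X$1 / lam]"
    using assms by (simp add: vec_eq_iff forall_3)
qed

lemma wedge_V2_eq:
  assumes "lam \<noteq> 0"
  shows "wedge lam p V2 Y = vector [lam * Y$3, - (p$1 * Y$1 / lam), (1 + (p$1)^2) * Y$1 / lam]"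
  using assms
  by (simp add: wedge_def fcoeff_eq V2_def frame_def Let_def vec_eq_iff forall_3
      field_simps power2_eq_square)

lemma V2_magnetic_curve_equations:
  fixes \<gamma> :: "real \<Rightarrow> real^3"
  assumes "lam \<noteq> 0" and "cov_acc lam \<gamma> t = wedge lam (\<gamma> t) V2 (vel \<gamma> t)"
  defines "x \<equiv> \<lambda>s. \<gamma> s $ 1" and "y \<equiv> \<lambda>s. \<gamma> s $ 2" and "z \<equiv> \<lambda>s. \<gamma> s $ 3"
  shows "deriv (deriv x) t + lam^2 * deriv y t * (deriv z t + x t * deriv y t) = lam * deriv z t"
    and "deriv (deriv y) t + deriv x t * (deriv z t + x t * deriv y t) = - (x t * deriv x t / lam)"
    and "deriv (deriv z) t + deriv x t * deriv y t - x t * deriv x t * (deriv z t + x t * deriv y t)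
           = (1 + (x t)^2) * deriv x t / lam"
  using assms(2)
  unfolding cov_acc_eq[OF assms(1)] wedge_V2_eq[OF assms(1)]
  by (simp_all add: vec_eq_iff forall_3 vel_def x_def y_def z_def)

lemma deriv_add_mult_real:
  fixes f g h :: "real \<Rightarrow> real"
  assumes "f differentiable at t" and "g differentiable at t" and "h differentiable at t"
  shows "deriv (\<lambda>s. f s + g s * h s) t = deriv f t + deriv g t * h t + g t * deriv h t"
proof -
  have "(f has_real_derivative deriv f t) (at t)" "(g has_real_derivative deriv g t) (at t)"
    "(h has_real_derivative deriv h t) (at t)"
    using assms by (simp_all add: DERIV_deriv_iff_real_differentiable)
  from DERIV_add[OF this(1) DERIV_mult[OF this(2,3)]] show ?thesis
    by (simp add: DERIV_imp_deriv add.assoc mult.commute)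
qed

theorem mainTheorem2:
  fixes lam :: real and \<gamma> :: "real \<Rightarrow> real^3" and I :: "real set"
  assumes lam_pos: "lam > 0"
    and I_open: "open I" and I_interval: "is_interval I"
    and smooth: "\<And>i n t. t \<in> I \<Longrightarrow> (deriv ^^ n) (\<lambda>s. \<gamma> s $ i) differentiable (at t)"
    and magnetic: "\<And>t. t \<in> I \<Longrightarrow> cov_acc lam \<gamma> t = wedge lam (\<gamma> t) V2 (vel \<gamma> t)"
  defines "x \<equiv> (\<lambda>s. \<gamma> s $ 1)" and "y \<equiv> (\<lambda>s. \<gamma> s $ 2)" and "z \<equiv> (\<lambda>s. \<gamma> s $ 3)"
  shows "\<forall>t\<in>I.
      deriv (deriv y) t + deriv x t * (deriv z t + x t * deriv y t) = - (x t * deriv x t) / lam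
    \<and> (lam * deriv y t - 1) * (deriv z t + x t * deriv y t) = - (x t * deriv y t) - deriv (deriv x) t / lam
    \<and> deriv (\<lambda>s. deriv z s + x s * deriv y s) t = deriv x t / lam"
proof
  fix t assume "t \<in> I"
  have "lam \<noteq> 0" using lam_pos by simp
  have "\<gamma> t $ 1 = x t" by (simp add: x_def)
  note eqs = V2_magnetic_curve_equations[OF \<open>lam \<noteq> 0\<close> magnetic[OF \<open>t \<in> I\<close>],
      folded x_def y_def z_def, unfolded \<open>\<gamma> t $ 1 = x t\<close>]
  have y''_eq: "deriv (deriv y) t = - (x t * deriv x t / lam) - deriv x t * (deriv z t + x t * deriv y t)"
    using eqs(2) by simp
  have "deriv z differentiable at t" "x differentiable at t" "deriv y differentiable at t"
    using smooth[OF \<open>t \<in> I\<close>, where i=3 and n=1] smooth[OF \<open>t \<in> I\<close>, where i=1 and n=0]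
      smooth[OF \<open>t \<in> I\<close>, where i=2 and n=1]
    by (simp_all add: x_def y_def z_def)
  then have "deriv (\<lambda>s. deriv z s + x s * deriv y s) t
      = deriv (deriv z) t + deriv x t * deriv y t + x t * deriv (deriv y) t"
    by (rule deriv_add_mult_real)
  also have "\<dots> = deriv x t / lam"
    unfolding y''_eq using eqs(3) \<open>lam \<noteq> 0\<close> by (simp add: field_simps power2_eq_square)
  finally show "deriv (deriv y) t + deriv x t * (deriv z t + x t * deriv y t) = - (x t * deriv x t) / lam
    \<and> (lam * deriv y t - 1) * (deriv z t + x t * deriv y t) = - (x t * deriv y t) - deriv (deriv x) t / lam
    \<and> deriv (\<lambda>s. deriv z s + x s * deriv y s) t = deriv x t / lam"
    using eqs(1,2) \<open>lam \<noteq> 0\<close> by (simp add: field_simps power2_eq_square)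
qed

end
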